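(* Let $A\in\mathbb{C}^{n\times n}$ be Hermitian with eigenvalues $\lambda_1,\dots,\lambda_n$ contained in $[\lambda_{\min},\lambda_{\max}]$, $\lambda_{\min}<\lambda_{\max}$, and let $l(x)=\frac{2x-\lambda_{\max}-\lambda_{\min}}{\lambda_{\max}-\lambda_{\min}}$. Let $[a,b]\subset[\lambda_{\min},\lambda_{\max}]$ with $a<b$, and set $\alpha=\arccos(l(a))$, $\beta=\arccos(l(b))$. Let $s(x)=1$ for $x\in(a,b)$, $s(x)=\tfrac12$ for $x\in\{a,b\}$, $s(x)=0$ otherwise, and let $P=s(A)$. Let $c_0=\frac1\pi(\alpha-\beta)$, $c_j=\frac{2}{\pi}\cdot\frac{\sin(j\alpha)-\sin(j\beta)}{j}$ ($j\ge1$), and for $m>0$ and integers $k\ge1$ let $d^m_{0,k}=1$, $d^m_{j,k}=\left(\frac{\sin(j\pi/(k+1))}{j\pi/(k+1)}\right)^m$ ($j\ge1$). For an integer $1\le k'\le k$ let \[ \rho^m_{k',k}(x)=\sum_{j=0}^{k'} c_j\,d^m_{j,k}\,T_j(l(x)), \] where $T_j$ is the $j$-th Chebyshev polynomial of the first kind, and let $P'=\rho^m_{k',k}(A)$. Then for every $m>0$, every integer $k\ge1$ and every integer $1\le k'\le k$, \[ \|P-P'\|_2\le \frac{d^m_{k',k}\,J^*}{\pi(k'+1)}+\frac{m\,\mathcal{C}_m\,J^*}{k+1}+\frac{m\pi^2}{3(k+1)^2}, \] where $J^*=\max_{1\le j\le n}J(\arccos(l(\lambda_j)))$, \[ \mathcal{C}_m=\int_0^{\pi}\frac{(\sin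 u)^{m-1}(\sin u-u\cos u)}{u^{m+2}}\,du, \] and for $\theta\in[0,\pi]$ \[ J(\theta)=\begin{cases} \frac{1}{|\sin\frac{\theta+\alpha}{2}|}+\frac{1}{|\sin\frac{\theta-\alpha}{2}|}+\frac{1}{|\sin\frac{\theta+\beta}{2}|}+\frac{1}{|\sin\frac{\theta-\beta}{2}|}, & \theta\ne\alpha,\beta,\\[4pt] \frac{1}{|\sin\alpha|}+\frac{1}{|\sin\frac{\alpha+\beta}{2}|}+\frac{1}{|\sin\frac{\alpha-\beta}{2}|}, & \theta=\alpha,\\[4pt] \frac{1}{|\sin\beta|}+\frac{1}{|\sin\frac{\alpha+\beta}{2}|}+\frac{1}{|\sin\frac{\alpha-\beta}{2}|}, & \theta=\beta. \end{cases} \]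
   Context: For a Hermitian $A=V\Lambda V^*$ and a real function $f$, $f(A)=V f(\Lambda)V^*$. Any term of the form $1/0$ in $J$ is interpreted as $+\infty$, in which case the bound holds trivially. $P$ is the spectral projector onto the invariant subspace for eigenvalues in $[a,b]$ (with weight $\tfrac12$ for eigenvalues equal to $a$ or $b$). *)

theory Defs
  imports "HOL-Analysis.Analysis"
begin

fun cheb_T :: "nat \<Rightarrow> real \<Rightarrow> real" where
  "cheb_T 0 x = 1"
| "cheb_T (Suc 0) x = x"
| "cheb_T (Suc (Suc n)) x = 2 * x * cheb_T (Suc n) x - cheb_T n x"

definition cadj :: "complex ^'n ^'n \<Rightarrow> complex ^'n ^'n" where
  "cadj A = (\<chi> i j. cnj (A $ j $ i))"

definition hermitian_mat :: "complex ^'n ^'n \<Rightarrow> bool" where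
  "hermitian_mat A \<longleftrightarrow> cadj A = A"

definition unitary_mat :: "complex ^'n ^'n \<Rightarrow> bool" where
  "unitary_mat V \<longleftrightarrow> cadj V ** V = mat 1 \<and> V ** cadj V = mat 1"

definition diag_mat :: "('n \<Rightarrow> complex) \<Rightarrow> complex ^'n ^'n" where
  "diag_mat d = (\<chi> i j. if i = j then d i else 0)"

text \<open>Functional calculus: for A = V diag(lam) V^*, f(A) = V diag(f(lam)) V^*.\<close>
definition mat_fun :: "complex ^'n ^'n \<Rightarrow> ('n \<Rightarrow> real) \<Rightarrow> (real \<Rightarrow> real) \<Rightarrow> complex ^'n ^'n" where
  "mat_fun V lam f = V ** diag_mat (\<lambda>i. complex_of_real (f (lam i))) ** cadj V"

definition spec_norm :: "complex ^'n ^'n \<Rightarrow> real" where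
  "spec_norm M = onorm (\<lambda>x. M *v x)"

definition lmap :: "real \<Rightarrow> real \<Rightarrow> real \<Rightarrow> real" where
  "lmap lmin lmax x = (2 * x - lmax - lmin) / (lmax - lmin)"

definition step_s :: "real \<Rightarrow> real \<Rightarrow> real \<Rightarrow> real" where
  "step_s a b x = (if a < x \<and> x < b then 1 else if x = a \<or> x = b then 1/2 else 0)"

definition cheb_c :: "real \<Rightarrow> real \<Rightarrow> nat \<Rightarrow> real" where
  "cheb_c \<alpha> \<beta> j = (if j = 0 then (\<alpha> - \<beta>) / pi
     else 2 / pi * ((sin (real j * \<alpha>) - sin (real j * \<beta>)) / real j))"

definition jackson_d :: "real \<Rightarrow> nat \<Rightarrow> nat \<Rightarrow> real" where
  "jackson_d m j k = (if j = 0 then 1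
     else (sin (real j * pi / real (k + 1)) / (real j * pi / real (k + 1))) powr m)"

definition rho :: "real \<Rightarrow> real \<Rightarrow> real \<Rightarrow> real \<Rightarrow> real \<Rightarrow> nat \<Rightarrow> nat \<Rightarrow> real \<Rightarrow> real" where
  "rho lmin lmax a b m k' k x =
     (\<Sum>j=0..k'. cheb_c (arccos (lmap lmin lmax a)) (arccos (lmap lmin lmax b)) j
                 * jackson_d m j k * cheb_T j (lmap lmin lmax x))"

definition C_const :: "real \<Rightarrow> real" where
  "C_const m = integral {0..pi}
     (\<lambda>u. (sin u) powr (m - 1) * (sin u - u * cos u) / u powr (m + 2))"

text \<open>J(theta), with 1/0 interpreted as +infinity (via ereal, where inverse 0 = infinity).\<close>
definition Jfun :: "real \<Rightarrow> real \<Rightarrow> real \<Rightarrow> ereal" where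
  "Jfun \<alpha> \<beta> \<theta> =
     (if \<theta> = \<alpha> then
        1 / ereal \<bar>sin \<alpha>\<bar> + 1 / ereal \<bar>sin ((\<alpha> + \<beta>) / 2)\<bar> + 1 / ereal \<bar>sin ((\<alpha> - \<beta>) / 2)\<bar>
      else if \<theta> = \<beta> then
        1 / ereal \<bar>sin \<beta>\<bar> + 1 / ereal \<bar>sin ((\<alpha> + \<beta>) / 2)\<bar> + 1 / ereal \<bar>sin ((\<alpha> - \<beta>) / 2)\<bar>
      else
        1 / ereal \<bar>sin ((\<theta> + \<alpha>) / 2)\<bar> + 1 / ereal \<bar>sin ((\<theta> - \<alpha>) / 2)\<bar>
        + 1 / ereal \<bar>sin ((\<theta> + \<beta>) / 2)\<bar> + 1 / ereal \<bar>sin ((\<theta> - \<beta>) / 2)\<bar>)"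

end

theory Submission
  imports Defs
begin

text \<open>
  After the affine change of variables \<open>x \<mapsto> l(x) = cos \<theta>\<close>, the Chebyshev polynomial \<open>T\<^sub>j\<close>
  becomes \<open>cos (j \<theta>)\<close> and the symbol \<open>s\<close> becomes the indicator of \<open>[\<beta>, \<alpha>]\<close> in \<open>\<theta>\<close>,
  whose cosine series has the coefficients \<open>c\<^sub>j\<close>. The error of its \<open>n\<close>-th partial sum is a
  combination of four shifted errors of the sawtooth series \<open>\<Sum>j. sin (j x) / j\<close>, each at most
  \<open>1 / ((n+1) \<bar>sin (x/2)\<bar>)\<close>; this is where \<open>J\<close> comes from. Summation by parts writes the
  error of the damped sum through these partial-sum errors weighted by the decrements
  \<open>d\<^sub>j - d\<^sub>j\<^sub>+\<^sub>1\<close> of the Jackson factors \<open>(sin u / u)\<^sup>m\<close> at \<open>u = j \<pi> / (k+1)\<close>: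
  the first decrement is at most \<open>m \<pi>\<^sup>2 / (3 (k+1)\<^sup>2)\<close>, the others add up to at most
  \<open>\<pi> m C\<^sub>m / (k+1)\<close> after dividing by \<open>j+1\<close>, since \<open>-d/du (sin u/u)\<^sup>m = m u\<close> times the
  integrand of \<open>C\<^sub>m\<close>, and the last error carries the factor \<open>d\<^sub>k\<^sub>'\<close>. Finally the spectral norm
  of \<open>V diag (f(\<lambda>) - g(\<lambda>)) V\<^sup>*\<close> is at most \<open>max\<^sub>i \<bar>f(\<lambda>\<^sub>i) - g(\<lambda>\<^sub>i)\<bar>\<close>.
\<close>

section \<open>The sine series of the sawtooth\<close>

definition sin_series :: "nat \<Rightarrow> real \<Rightarrow> real" where
  "sin_series n x = (\<Sum>j=1..n. sin (real j * x) / real j)"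

lemma sin_series_0 [simp]: "sin_series n 0 = 0"
  by (simp add: sin_series_def)

lemma sin_series_minus: "sin_series n (- x) = - sin_series n x"
  by (simp add: sin_series_def sum_negf[symmetric])

lemma sin_series_reflect: "sin_series n (2 * pi - x) = - sin_series n x"
proof -
  have "sin (real j * (2 * pi - x)) = - sin (real j * x)" for j
  proof -
    have "real j * (2 * pi - x) = 2 * real j * pi - real j * x"
      by (simp add: algebra_simps)
    then show ?thesis by (simp add: sin_diff sin_2npi cos_2npi)
  qed
  then show ?thesis by (simp add: sin_series_def sum_negf[symmetric])
qed

lemma sin_series_pi [simp]: "sin_series n pi = 0"
  by (simp add: sin_series_def sin_npi mult.commute)

lemma sin_series_deriv: "(sin_series n has_real_derivative (\<Sum>j=1..n. cos (real j * x))) (at x)"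
  unfolding sin_series_def[abs_def] by (auto intro!: derivative_eq_intros)

lemma Dirichlet_kernel_sum:
  "2 * sin (x/2) * (1/2 + (\<Sum>j=1..n. cos (real j * x))) = sin ((real n + 1/2) * x)"
proof (induction n)
  case (Suc n)
  have "2 * sin (x/2) * cos (real (Suc n) * x) = sin ((real (Suc n) + 1/2) * x) - sin ((real n + 1/2) * x)"
    using sin_add[of "real (Suc n) * x" "x/2"] sin_diff[of "real (Suc n) * x" "x/2"]
    by (simp add: algebra_simps)
  with Suc show ?case by (simp add: algebra_simps)
qed simp

text \<open>The subtracted \<open>1/N\<close> strengthens the claim just enough for an induction on \<open>N\<close>.\<close>
lemma abs_sum_differences_div_le:
  fixes c :: "nat \<Rightarrow> real"
  assumes c: "\<And>j. \<bar>c j\<bar> \<le> 1" and "n < N"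
  shows "\<bar>(\<Sum>j=Suc n..N. (c (j - 1) - c j) / real j) + c N / real N\<bar> \<le> 2 / real (n + 1) - 1 / real N"
  using \<open>n < N\<close>
proof (induction N)
  case (Suc N)
  show ?case
  proof (cases "n = N")
    case True
    with c[of n] show ?thesis by (simp add: abs_divide divide_simps)
  next
    case False
    with Suc have "n < N" by simp
    have eq: "(\<Sum>j=Suc n..Suc N. (c (j - 1) - c j) / real j) + c (Suc N) / real (Suc N)
       = ((\<Sum>j=Suc n..N. (c (j - 1) - c j) / real j) + c N / real N) - c N * (1 / real N - 1 / real (Suc N))"
      using \<open>n < N\<close> by (simp add: algebra_simps diff_divide_distrib)
    have "0 \<le> 1 / real N - 1 / real (Suc N)"
      using \<open>n < N\<close> by (simp add: divide_simps)
    then have "\<bar>c N * (1 / real N - 1 / real (Suc N))\<bar> \<le> 1 / real N - 1 / real (Suc N)"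
      using c[of N] by (simp add: abs_mult mult_left_le_one_le)
    then show ?thesis
      unfolding eq using Suc.IH[OF \<open>n < N\<close>] by linarith
  qed
qed simp

lemma sin_series_tail:
  assumes x: "0 < x" "x < 2 * pi" and "n \<le> N"
  shows "\<bar>sin_series N x - sin_series n x\<bar> \<le> 1 / (real (n + 1) * sin (x/2))"
proof (cases "n = N")
  case False
  with \<open>n \<le> N\<close> have "n < N" by simp
  define c where "c j = cos ((real j + 1/2) * x)" for j
  have s: "sin (x/2) > 0"
    using x by (intro sin_gt_zero) auto
  have prod_to_diff: "2 * sin (x/2) * sin (real j * x) = c (j - 1) - c j" if "1 \<le> j" for j
  proof -
    have "real (j - 1) = real j - 1" using that by simp
    then show ?thesis
      unfolding c_def using cos_add[of "real j * x" "x/2"] cos_diff[of "real j * x" "x/2"]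
      by (simp add: algebra_simps)
  qed
  have "sin_series N x - sin_series n x = (\<Sum>j=Suc n..N. sin (real j * x) / real j)"
    using sum.ub_add_nat[of 1 n "\<lambda>j. sin (real j * x) / real j" "N - n"] \<open>n < N\<close>
    by (simp add: sin_series_def)
  then have "2 * sin (x/2) * (sin_series N x - sin_series n x)
      = (\<Sum>j=Suc n..N. 2 * sin (x/2) * sin (real j * x) / real j)"
    by (simp add: sum_distrib_left)
  also have "\<dots> = (\<Sum>j=Suc n..N. (c (j - 1) - c j) / real j)"
    by (rule sum.cong) (auto simp: prod_to_diff)
  finally have "2 * sin (x/2) * (sin_series N x - sin_series n x) = \<dots>" .
  moreover have "\<bar>(\<Sum>j=Suc n..N. (c (j - 1) - c j) / real j) + c N / real N\<bar> \<le> 2 / real (n + 1) - 1 / real N"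
    by (rule abs_sum_differences_div_le[OF _ \<open>n < N\<close>]) (simp add: c_def)
  moreover have "\<bar>c N / real N\<bar> \<le> 1 / real N"
    by (simp add: c_def abs_divide divide_right_mono)
  ultimately have "\<bar>2 * sin (x/2) * (sin_series N x - sin_series n x)\<bar> \<le> 2 / real (n + 1)"
    by linarith
  moreover have "\<bar>2 * sin (x/2) * (sin_series N x - sin_series n x)\<bar>
      = 2 * (\<bar>sin_series N x - sin_series n x\<bar> * sin (x/2))"
    using s by (simp add: abs_mult)
  ultimately have "\<bar>sin_series N x - sin_series n x\<bar> * sin (x/2) \<le> 1 / real (n + 1)"
    by simp
  with s show ?thesis
    by (simp add: pos_le_divide_eq le_divide_eq mult_ac del: of_nat_Suc)
qed (use x in \<open>auto intro!: mult_nonneg_nonneg sin_ge_zero\<close>)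

lemma sawtooth_remainder_deriv:
  fixes N :: nat
  defines "h \<equiv> real N + 1/2"
  assumes s: "sin (y/2) \<noteq> 0"
  shows "((\<lambda>y. (pi - y)/2 - sin_series N y - cos (h * y) / (2 * h * sin (y/2)))
      has_real_derivative cos (h * y) * cos (y/2) / (4 * h * (sin (y/2))\<^sup>2)) (at y)"
proof -
  have h: "h > 0" by (simp add: h_def)
  have "(\<Sum>j=1..N. cos (real j * y)) = sin (h * y) / (2 * sin (y/2)) - 1/2"
    using Dirichlet_kernel_sum[of y N] s by (simp add: h_def field_simps)
  then have "(sin_series N has_real_derivative sin (h * y) / (2 * sin (y/2)) - 1/2) (at y)"
    using sin_series_deriv by metis
  then show ?thesis
    using s h by (auto intro!: derivative_eq_intros simp: field_simps power2_eq_square)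
qed

text \<open>With \<open>h = N + 1/2\<close>, write the error as \<open>F y + cos (h y) / (2 h sin (y/2))\<close>; then both
  \<open>F \<plusminus> 1 / (2 h sin (y/2))\<close> are monotone on \<open>[x, pi]\<close>, and \<open>F pi = 0\<close>.\<close>
lemma sawtooth_sin_series_coarse:
  assumes x: "0 < x" "x \<le> pi"
  shows "\<bar>(pi - x)/2 - sin_series N x\<bar> \<le> 2 / ((2 * real N + 1) * sin (x/2))"
proof -
  define h where "h = real N + 1/2"
  define F where "F y = (pi - y)/2 - sin_series N y - cos (h * y) / (2 * h * sin (y/2))" for y
  define H where "H y = 1 / (2 * h * sin (y/2))" for y
  have h: "h > 0"
    by (simp add: h_def)
  have s: "sin (y/2) > 0" and c: "cos (y/2) \<ge> 0" if "x \<le> y" "y \<le> pi" for y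
    using that x by (auto intro!: sin_gt_zero cos_ge_zero)
  have dF: "(F has_real_derivative cos (h * y) * cos (y/2) / (4 * h * (sin (y/2))\<^sup>2)) (at y)"
    if "x \<le> y" "y \<le> pi" for y
    unfolding F_def[abs_def] h_def using sawtooth_remainder_deriv s[OF that] by simp
  have dH: "(H has_real_derivative - cos (y/2) / (4 * h * (sin (y/2))\<^sup>2)) (at y)"
    if "x \<le> y" "y \<le> pi" for y
    unfolding H_def[abs_def] using s[OF that] h
    by (auto intro!: derivative_eq_intros simp: power2_eq_square field_simps)
  have "F pi + H pi \<le> F x + H x"
  proof (rule DERIV_nonpos_imp_nonincreasing[of x pi "\<lambda>y. F y + H y"])
    fix y assume y: "x \<le> y" "y \<le> pi"
    have "((\<lambda>y. F y + H y) has_real_derivative (cos (h * y) - 1) * cos (y/2) / (4 * h * (sin (y/2))\<^sup>2)) (at y)"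
      by (rule DERIV_cong[OF DERIV_add[OF dF[OF y] dH[OF y]]]) (use h s[OF y] in \<open>simp add: field_simps\<close>)
    moreover have "(cos (h * y) - 1) * cos (y/2) / (4 * h * (sin (y/2))\<^sup>2) \<le> 0"
      using h c[OF y] by (intro divide_nonpos_nonneg mult_nonpos_nonneg) auto
    ultimately show "\<exists>d. ((\<lambda>y. F y + H y) has_real_derivative d) (at y) \<and> d \<le> 0"
      by blast
  qed (use x in simp)
  moreover have "F x - H x \<le> F pi - H pi"
  proof (rule DERIV_nonneg_imp_nondecreasing[of x pi "\<lambda>y. F y - H y"])
    fix y assume y: "x \<le> y" "y \<le> pi"
    have "((\<lambda>y. F y - H y) has_real_derivative (cos (h * y) + 1) * cos (y/2) / (4 * h * (sin (y/2))\<^sup>2)) (at y)"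
      by (rule DERIV_cong[OF DERIV_diff[OF dF[OF y] dH[OF y]]]) (use h s[OF y] in \<open>simp add: field_simps\<close>)
    moreover have "0 \<le> cos (h * y) + 1"
      using cos_ge_minus_one[of "h * y"] by linarith
    then have "(cos (h * y) + 1) * cos (y/2) / (4 * h * (sin (y/2))\<^sup>2) \<ge> 0"
      using h c[OF y] by (intro divide_nonneg_nonneg mult_nonneg_nonneg) auto
    ultimately show "\<exists>d. ((\<lambda>y. F y - H y) has_real_derivative d) (at y) \<and> d \<ge> 0"
      by blast
  qed (use x in simp)
  moreover have "F pi = 0"
  proof -
    have "cos (h * pi) = 0"
      using cos_add[of "real N * pi" "pi/2"] by (simp add: h_def algebra_simps sin_npi)
    then show ?thesis by (simp add: F_def)
  qed
  moreover have "H pi \<ge> 0"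
    using h by (simp add: H_def)
  ultimately have "\<bar>F x\<bar> \<le> H x"
    by linarith
  moreover have "\<bar>cos (h * x) / (2 * h * sin (x/2))\<bar> \<le> H x"
    unfolding H_def using h s[of x] x by (simp add: abs_divide divide_right_mono)
  ultimately have "\<bar>(pi - x)/2 - sin_series N x\<bar> \<le> 2 * H x"
    unfolding F_def by linarith
  then show ?thesis
    by (simp add: H_def h_def)
qed

text \<open>Let \<open>N \<rightarrow> \<infinity>\<close> in the coarse bound for the \<open>N\<close>-th partial sum plus the tail bound from \<open>n\<close>
  to \<open>N\<close>.\<close>
lemma sawtooth_sin_series_error:
  assumes x: "0 < x" "x \<le> pi"
  shows "\<bar>(pi - x)/2 - sin_series n x\<bar> \<le> 1 / (real (n + 1) * sin (x/2))"
proof -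
  define B where "B = 1 / (real (n + 1) * sin (x/2))"
  have s: "sin (x/2) > 0"
    using x by (intro sin_gt_zero) auto
  have "\<bar>(pi - x)/2 - sin_series n x\<bar> \<le> B + (1 / sin (x/2)) / real N" if "max n 1 \<le> N" for N
  proof -
    have "2 / ((2 * real N + 1) * sin (x/2)) \<le> (1 / sin (x/2)) / real N"
      using s that by (simp add: divide_simps)
    then have "\<bar>(pi - x)/2 - sin_series N x\<bar> \<le> (1 / sin (x/2)) / real N"
      using sawtooth_sin_series_coarse[OF x, of N] by linarith
    moreover have "\<bar>sin_series N x - sin_series n x\<bar> \<le> B"
      unfolding B_def using sin_series_tail[of x n N] x that by simp
    ultimately show ?thesis
      by linarith
  qed
  moreover have "(\<lambda>N. B + (1 / sin (x/2)) / real N) \<longlonglongrightarrow> B"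
    using tendsto_add[OF tendsto_const lim_const_over_n, of B "1 / sin (x/2)"] by simp
  ultimately show ?thesis
    unfolding B_def[symmetric] by (intro LIMSEQ_le_const) blast+
qed

text \<open>The odd \<open>2 pi\<close>-periodic sawtooth, the sum of the series \<open>\<Sum>j. sin (j x) / j\<close>;
  only its values on \<open>[-2 pi, 2 pi]\<close> are needed.\<close>
definition sawtooth :: "real \<Rightarrow> real" where
  "sawtooth x = (if 0 < x \<and> x < 2 * pi then (pi - x)/2
    else if - 2 * pi < x \<and> x < 0 then - (pi + x)/2 else 0)"

text \<open>At the zeros of \<open>sin (x/2)\<close> the sine series is exact, so the weight \<open>0\<close> there is no junk value.\<close>
definition abs_csc_half :: "real \<Rightarrow> real" where
  "abs_csc_half x = (if sin (x/2) = 0 then 0 else 1 / \<bar>sin (x/2)\<bar>)"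

lemma sawtooth_sin_series_bound:
  assumes "- 2 * pi \<le> x" "x \<le> 2 * pi"
  shows "\<bar>sawtooth x - sin_series n x\<bar> \<le> abs_csc_half x / real (n + 1)"
proof -
  have pos: "\<bar>sawtooth y - sin_series n y\<bar> \<le> abs_csc_half y / real (n + 1)"
    if y: "0 < y" "y < 2 * pi" for y
  proof (cases "y \<le> pi")
    case True
    have "sin (y/2) > 0"
      using y by (intro sin_gt_zero) auto
    then show ?thesis
      using sawtooth_sin_series_error[OF y(1) True, of n] y
      by (simp add: sawtooth_def abs_csc_half_def mult.commute)
  next
    case False
    define z where "z = 2 * pi - y"
    have z: "0 < z" "z \<le> pi" "y = 2 * pi - z"
      using y False by (auto simp: z_def)
    have "sin (z/2) > 0"
      using z by (intro sin_gt_zero) auto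
    moreover have "sin (y/2) = sin (z/2)"
      by (simp add: z(3) diff_divide_distrib sin_diff)
    moreover have "\<bar>sawtooth y - sin_series n y\<bar> = \<bar>(pi - z)/2 - sin_series n z\<bar>"
      using y unfolding sawtooth_def z(3) sin_series_reflect by (simp add: abs_minus_commute) argo
    ultimately show ?thesis
      using sawtooth_sin_series_error[OF z(1,2), of n] by (simp add: abs_csc_half_def mult.commute)
  qed
  consider "x = 0 \<or> x = 2 * pi \<or> x = - 2 * pi" | "0 < x" "x < 2 * pi" | "- 2 * pi < x" "x < 0"
    using assms by linarith
  then show ?thesis
  proof cases
    case 1
    then show ?thesis
      using sin_series_reflect[of n 0] sin_series_minus[of n "2 * pi"]
      by (auto simp: sawtooth_def abs_csc_half_def)
  next
    case 2
    then show ?thesis by (rule pos)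
  next
    case 3
    then have "sawtooth (- x) = - sawtooth x" "abs_csc_half (- x) = abs_csc_half x"
      by (auto simp: sawtooth_def abs_csc_half_def field_simps)
    with pos[of "- x"] 3 show ?thesis
      by (simp add: sin_series_minus abs_minus_commute)
  qed
qed

section \<open>Cosine partial sums of the step function\<close>

text \<open>The symbol \<open>step_s a b\<close> in the angle variable \<open>\<theta> = arccos (l x)\<close>; as \<open>arccos\<close> is
  decreasing, \<open>al\<close> and \<open>be\<close> are the angles of \<open>a\<close> and \<open>b\<close>.\<close>
definition angle_step :: "real \<Rightarrow> real \<Rightarrow> real \<Rightarrow> real" where
  "angle_step al be t = (if be < t \<and> t < al then 1 else if t = al \<or> t = be then 1/2 else 0)"

text \<open>The excluded points are exactly those where \<open>Jfun\<close> is infinite.\<close>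
lemma angle_step_sawtooth:
  assumes "0 \<le> be" "be < al" "al \<le> pi" "0 \<le> t" "t \<le> pi"
    and "\<not> (t = al \<and> al = pi)" "\<not> (t = be \<and> be = 0)"
  shows "angle_step al be t
    = (al - be)/pi + (sawtooth (al + t) + sawtooth (al - t) - sawtooth (be + t) - sawtooth (be - t))/pi"
proof -
  have "angle_step al be t * pi
      = (al - be) + (sawtooth (al + t) + sawtooth (al - t) - sawtooth (be + t) - sawtooth (be - t))"
    using assms pi_gt_zero unfolding angle_step_def sawtooth_def by (auto simp: field_simps)
  then have "angle_step al be t
      = ((al - be) + (sawtooth (al + t) + sawtooth (al - t) - sawtooth (be + t) - sawtooth (be - t))) / pi"
    by (simp add: eq_divide_eq)
  then show ?thesis
    by (simp add: add_divide_distrib)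
qed

lemma cheb_c_cos_partial_sum:
  "(\<Sum>j=0..n. cheb_c al be j * cos (real j * t))
    = (al - be)/pi + (sin_series n (al + t) + sin_series n (al - t)
                      - sin_series n (be + t) - sin_series n (be - t))/pi"
proof -
  have "cheb_c al be j * cos (real j * t)
      = (sin (real j * (al + t)) / real j + sin (real j * (al - t)) / real j
         - sin (real j * (be + t)) / real j - sin (real j * (be - t)) / real j) / pi"
    if "j \<in> {1..n}" for j
  proof -
    have prod_sum: "2 * sin u * cos v = sin (u + v) + sin (u - v)" for u v :: real
      by (simp add: sin_add sin_diff)
    show ?thesis
      using that prod_sum[of "real j * al" "real j * t"] prod_sum[of "real j * be" "real j * t"]
      by (simp add: cheb_c_def field_simps)
  qed
  then have "(\<Sum>j=1..n. cheb_c al be j * cos (real j * t))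
      = (\<Sum>j=1..n. (sin (real j * (al + t)) / real j + sin (real j * (al - t)) / real j
         - sin (real j * (be + t)) / real j - sin (real j * (be - t)) / real j) / pi)"
    by (rule sum.cong[OF refl])
  also have "\<dots> = (sin_series n (al + t) + sin_series n (al - t)
                    - sin_series n (be + t) - sin_series n (be - t))/pi"
    by (simp add: sin_series_def sum_divide_distrib[symmetric] sum.distrib sum_subtractf)
  finally have "(\<Sum>j=1..n. cheb_c al be j * cos (real j * t)) = \<dots>" .
  then show ?thesis
    by (simp add: sum.atLeast_Suc_atMost cheb_c_def)
qed

definition csc_sum :: "real \<Rightarrow> real \<Rightarrow> real \<Rightarrow> real" where
  "csc_sum al be t = abs_csc_half (al + t) + abs_csc_half (al - t) + abs_csc_half (be + t) + abs_csc_half (be - t)"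

lemma angle_step_cos_partial_sum_error:
  assumes "0 \<le> be" "be < al" "al \<le> pi" "0 \<le> t" "t \<le> pi"
    and "\<not> (t = al \<and> al = pi)" "\<not> (t = be \<and> be = 0)"
  shows "\<bar>angle_step al be t - (\<Sum>j=0..n. cheb_c al be j * cos (real j * t))\<bar>
    \<le> csc_sum al be t / (pi * real (n + 1))"
proof -
  define E where "E y = sawtooth y - sin_series n y" for y
  have E: "\<bar>E y\<bar> \<le> abs_csc_half y / real (n + 1)" if "- 2 * pi \<le> y" "y \<le> 2 * pi" for y
    unfolding E_def using sawtooth_sin_series_bound that .
  have "angle_step al be t - (\<Sum>j=0..n. cheb_c al be j * cos (real j * t))
      = (E (al + t) + E (al - t) - E (be + t) - E (be - t)) / pi"
    unfolding cheb_c_cos_partial_sum angle_step_sawtooth[OF assms] E_def by (simp add: field_simps)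
  moreover have "\<bar>E (al + t) + E (al - t) - E (be + t) - E (be - t)\<bar> \<le> csc_sum al be t / real (n + 1)"
    using E[of "al + t"] E[of "al - t"] E[of "be + t"] E[of "be - t"] assms
    by (simp add: csc_sum_def add_divide_distrib)
  then have "\<bar>E (al + t) + E (al - t) - E (be + t) - E (be - t)\<bar> / pi \<le> csc_sum al be t / real (n + 1) / pi"
    by (rule divide_right_mono) simp
  ultimately show ?thesis
    by (simp add: abs_divide mult.commute)
qed

section \<open>Jackson damping factors\<close>

lemma sin_ge_cubic:
  fixes u :: real
  assumes "0 \<le> u"
  shows "u - u ^ 3 / 6 \<le> sin u"
proof -
  have "\<bar>sin u - u\<bar> \<le> u ^ 3 / 6"
    using Maclaurin_sin_bound[of u 3] assms by (simp add: eval_nat_numeral sin_coeff_def)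
  then show ?thesis
    unfolding abs_le_iff by linarith
qed

lemma sinc_ge_half:
  fixes u :: real
  assumes "0 < u" "u \<le> pi / 2"
  shows "1/2 \<le> sin u / u"
proof -
  have "u \<le> 1.6"
    using assms pi_approx(2) by simp
  then have "u ^ 2 \<le> 1.6 ^ 2"
    using assms by (intro power_mono) auto
  then have "u ^ 2 \<le> 3"
    by (simp add: power_divide)
  moreover have "1 - u ^ 2 / 6 \<le> sin u / u"
    using sin_ge_cubic[of u] assms by (simp add: field_simps power2_eq_square power3_eq_cube)
  ultimately show ?thesis
    by linarith
qed

lemma sin_minus_mult_cos_nonneg:
  fixes u :: real
  assumes "0 \<le> u" "u \<le> pi"
  shows "0 \<le> sin u - u * cos u"
proof -
  have "(\<lambda>v. sin v - v * cos v) 0 \<le> (\<lambda>v. sin v - v * cos v) u"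
  proof (rule DERIV_nonneg_imp_nondecreasing[OF assms(1)])
    fix x assume "0 \<le> x" "x \<le> u"
    then show "\<exists>y. ((\<lambda>v. sin v - v * cos v) has_real_derivative y) (at x) \<and> 0 \<le> y"
      using assms by (intro exI[of _ "x * sin x"]) (auto intro!: derivative_eq_intros mult_nonneg_nonneg sin_ge_zero)
  qed
  then show ?thesis
    by simp
qed

lemma sin_minus_mult_cos_le:
  fixes u :: real
  assumes "0 \<le> u"
  shows "sin u - u * cos u \<le> u ^ 3 / 3"
proof -
  have "(\<lambda>v. v ^ 3 / 3 - sin v + v * cos v) 0 \<le> (\<lambda>v. v ^ 3 / 3 - sin v + v * cos v) u"
  proof (rule DERIV_nonneg_imp_nondecreasing[OF assms])
    fix x assume "0 \<le> x" "x \<le> u"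
    then have "0 \<le> x * (x - sin x)"
      using sin_x_le_x[of x] by simp
    then show "\<exists>y. ((\<lambda>v. v ^ 3 / 3 - sin v + v * cos v) has_real_derivative y) (at x) \<and> 0 \<le> y"
      by (intro exI[of _ "x * (x - sin x)"]) (auto intro!: derivative_eq_intros simp: power2_eq_square algebra_simps)
  qed
  then show ?thesis
    by simp
qed

definition sinc_pow :: "real \<Rightarrow> real \<Rightarrow> real" where
  "sinc_pow m u = (sin u / u) powr m"

definition C_integrand :: "real \<Rightarrow> real \<Rightarrow> real" where
  "C_integrand m u = (sin u) powr (m - 1) * (sin u - u * cos u) / u powr (m + 2)"

lemma C_const_eq_integral: "C_const m = integral {0..pi} (C_integrand m)"
  by (simp add: C_const_def C_integrand_def[abs_def])

lemma jackson_d_eq_sinc_pow: "1 \<le> j \<Longrightarrow> jackson_d m j k = sinc_pow m (real j * pi / real (k + 1))"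
  by (simp add: jackson_d_def sinc_pow_def)

lemma C_integrand_nonneg: "0 \<le> u \<Longrightarrow> u \<le> pi \<Longrightarrow> 0 \<le> C_integrand m u"
  unfolding C_integrand_def using sin_minus_mult_cos_nonneg[of u] by simp

lemma C_integrand_eq:
  assumes "0 < u" "u < pi"
  shows "C_integrand m u = (sin u / u) powr (m - 1) * ((sin u - u * cos u) / u ^ 3)"
proof -
  have "u powr (m + 2) = u powr (m - 1) * u ^ 3"
    using assms powr_add[of u "m - 1" 3] powr_realpow[of u 3] by (simp add: add.commute)
  then show ?thesis
    using assms sin_gt_zero[of u] by (simp add: C_integrand_def powr_divide)
qed

lemma C_integrand_le:
  assumes u: "0 < u" "u < pi / 2"
  shows "C_integrand m u \<le> (1 + (1/2) powr (m - 1)) / 3"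
proof -
  have "sin u / u \<le> 1"
    using sin_x_le_x[of u] u by simp
  moreover have "1/2 \<le> sin u / u"
    using sinc_ge_half[of u] u by simp
  ultimately have "(sin u / u) powr (m - 1) \<le> 1 + (1/2) powr (m - 1)"
  proof (cases "m \<ge> 1")
    case True
    with \<open>sin u / u \<le> 1\<close> \<open>1/2 \<le> sin u / u\<close> have "(sin u / u) powr (m - 1) \<le> 1 powr (m - 1)"
      by (intro powr_mono2) linarith+
    then have "(sin u / u) powr (m - 1) \<le> 1"
      by simp
    then show ?thesis
      using powr_ge_zero[of "1/2" "m - 1"] by linarith
  next
    case False
    with \<open>1/2 \<le> sin u / u\<close> have "(sin u / u) powr (m - 1) \<le> (1/2) powr (m - 1)"
      by (intro powr_mono2') auto
    then show ?thesis
      by simp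
  qed
  moreover have "0 \<le> (sin u - u * cos u) / u ^ 3"
    using sin_minus_mult_cos_nonneg[of u] u by simp
  moreover have "(sin u - u * cos u) / u ^ 3 \<le> 1/3"
    using sin_minus_mult_cos_le[of u] u by (simp add: divide_simps)
  ultimately have "(sin u / u) powr (m - 1) * ((sin u - u * cos u) / u ^ 3) \<le> (1 + (1/2) powr (m - 1)) * (1/3)"
    by (intro mult_mono) (auto intro: add_nonneg_nonneg)
  then show ?thesis
    using u by (simp add: C_integrand_eq)
qed

lemma sinc_pow_deriv:
  assumes u: "0 < u" "u < pi"
  shows "(sinc_pow m has_real_derivative - (m * (u * C_integrand m u))) (at u)"
proof -
  have "((\<lambda>v. sin v / v) has_real_derivative (cos u * u - sin u) / u\<^sup>2) (at u)"
    using u by (auto intro!: derivative_eq_intros simp: power2_eq_square)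
  from DERIV_fun_powr[OF this, of m]
  have "(sinc_pow m has_real_derivative m * (sin u / u) powr (m - 1) * ((cos u * u - sin u) / u\<^sup>2)) (at u)"
    unfolding sinc_pow_def[abs_def] using u sin_gt_zero[OF u] by simp
  moreover have "m * (u * C_integrand m u) = m * (sin u / u) powr (m - 1) * ((sin u - u * cos u) / u\<^sup>2)"
    using u by (simp add: C_integrand_eq power2_eq_square power3_eq_cube)
  moreover have "m * (sin u / u) powr (m - 1) * ((cos u * u - sin u) / u\<^sup>2)
      = - (m * (sin u / u) powr (m - 1) * ((sin u - u * cos u) / u\<^sup>2))"
    using u by (simp add: field_simps)
  ultimately show ?thesis
    by simp
qed

lemma continuous_on_C_integrand: "continuous_on {0<..<pi} (C_integrand m)"
  unfolding C_integrand_def[abs_def] by (intro continuous_intros) (use sin_gt_zero in fastforce)+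

text \<open>Near \<open>0\<close> the integrand is bounded; near \<open>pi\<close> (where it is unbounded for \<open>m < 1\<close>) it is
  dominated by a multiple of \<open>u * C_integrand m u\<close>, which is integrable as \<open>-1/m\<close> times the
  derivative of \<open>sinc_pow m\<close>.\<close>
lemma C_integrand_integrable:
  assumes m: "m > 0"
  shows "C_integrand m integrable_on {0..pi}"
proof (rule Henstock_Kurzweil_Integration.integrable_combine[where a=0 and c="pi/2" and b=pi])
  show "C_integrand m integrable_on {0..pi/2}"
    unfolding integrable_on_open_interval_real[symmetric]
  proof (rule measurable_bounded_by_integrable_imp_integrable_real)
    show "C_integrand m \<in> borel_measurable (lebesgue_on {0<..<pi/2})"
      by (rule continuous_imp_measurable_on_sets_lebesgue)
         (auto intro: continuous_on_subset[OF continuous_on_C_integrand])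
    show "(\<lambda>x. (1 + (1/2) powr (m - 1)) / 3) integrable_on {0<..<pi/2}"
      unfolding integrable_on_open_interval_real by (rule integrable_const_ivl)
    fix u assume "u \<in> {0<..<pi/2}"
    then show "\<bar>C_integrand m u\<bar> \<le> (1 + (1/2) powr (m - 1)) / 3"
      using C_integrand_le[of u m] C_integrand_nonneg[of u m] by simp
  qed simp
  show "C_integrand m integrable_on {pi/2..pi}"
    unfolding integrable_on_open_interval_real[symmetric]
  proof (rule measurable_bounded_by_integrable_imp_integrable_real)
    show "C_integrand m \<in> borel_measurable (lebesgue_on {pi/2<..<pi})"
      by (rule continuous_imp_measurable_on_sets_lebesgue)
         (auto intro: continuous_on_subset[OF continuous_on_C_integrand])
    have "continuous_on {pi/2..pi} (sinc_pow m)"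
      unfolding sinc_pow_def[abs_def] using m
      by (intro continuous_on_powr' continuous_intros)
         (auto intro!: divide_nonneg_nonneg sin_ge_zero, use pi_gt_zero in linarith)
    then have "((\<lambda>u. - (m * (u * C_integrand m u))) has_integral sinc_pow m pi - sinc_pow m (pi/2)) {pi/2..pi}"
      by (intro fundamental_theorem_of_calculus_interior)
         (auto simp flip: has_real_derivative_iff_has_vector_derivative intro!: sinc_pow_deriv)
    then have "(\<lambda>u. u * C_integrand m u) integrable_on {pi/2..pi}"
      using m integrable_neg by fastforce
    then show "(\<lambda>u. 2 / pi * (u * C_integrand m u)) integrable_on {pi/2<..<pi}"
      unfolding integrable_on_open_interval_real by simp
    fix u assume u: "u \<in> {pi/2<..<pi}"
    have "0 \<le> C_integrand m u"
      using u by (intro C_integrand_nonneg) auto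
    moreover have "1 \<le> 2 / pi * u"
      using u by (simp add: field_simps)
    ultimately show "\<bar>C_integrand m u\<bar> \<le> 2 / pi * (u * C_integrand m u)"
      using mult_right_mono[of 1 "2 / pi * u" "C_integrand m u"] by simp
  qed simp
qed simp_all

lemma C_const_nonneg: "m > 0 \<Longrightarrow> 0 \<le> C_const m"
  unfolding C_const_eq_integral
  by (rule integral_nonneg[OF C_integrand_integrable]) (auto intro: C_integrand_nonneg)

lemma sinc_pow_decrease_bound:
  assumes ab: "0 < a" "a \<le> b" "b < pi" and m: "m > 0"
  shows "0 \<le> sinc_pow m a - sinc_pow m b"
    and "sinc_pow m a - sinc_pow m b \<le> b * m * integral {a..b} (C_integrand m)"
proof -
  have deriv: "(sinc_pow m has_real_derivative - (m * (x * C_integrand m x))) (at x)" if "x \<in> {a..b}" for x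
    using that ab by (intro sinc_pow_deriv) auto
  have "((\<lambda>u. - (m * (u * C_integrand m u))) has_integral sinc_pow m b - sinc_pow m a) {a..b}"
  proof (rule fundamental_theorem_of_calculus_interior)
    show "continuous_on {a..b} (sinc_pow m)"
      by (rule DERIV_continuous_on[OF DERIV_subset[OF deriv]]) auto
  qed (use ab deriv in \<open>auto simp flip: has_real_derivative_iff_has_vector_derivative\<close>)
  from has_integral_neg[OF this]
  have int: "((\<lambda>u. m * (u * C_integrand m u)) has_integral sinc_pow m a - sinc_pow m b) {a..b}"
    by simp
  have nonneg: "0 \<le> C_integrand m u" if "u \<in> {a..b}" for u
    using that ab by (intro C_integrand_nonneg) auto
  show "0 \<le> sinc_pow m a - sinc_pow m b"
    by (rule has_integral_nonneg[OF int]) (use nonneg ab m in auto)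
  have "C_integrand m integrable_on {a..b}"
    by (rule integrable_subinterval_real[OF C_integrand_integrable[OF m]]) (use ab in auto)
  then have "((\<lambda>u. b * m * C_integrand m u) has_integral b * m * integral {a..b} (C_integrand m)) {a..b}"
    by (intro has_integral_mult_right integrable_integral)
  then show "sinc_pow m a - sinc_pow m b \<le> b * m * integral {a..b} (C_integrand m)"
    by (rule has_integral_le[OF int]) (use nonneg m in \<open>auto intro!: mult_right_mono\<close>)
qed

lemma sum_integral_consecutive:
  fixes g :: "real \<Rightarrow> 'a::banach"
  assumes mono: "\<And>j. u j \<le> u (Suc j)" and "a \<le> n" and "g integrable_on {u a..u n}"
  shows "(\<Sum>j=a..<n. integral {u j..u (Suc j)} g) = integral {u a..u n} g"
  using assms(2,3)
proof (induction n rule: dec_induct)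
  case (step n)
  have "u a \<le> u n"
    using lift_Suc_mono_le[of u, OF mono step.hyps(1)] .
  moreover have "g integrable_on {u a..u n}"
    by (rule integrable_subinterval_real[OF step.prems]) (use mono in auto)
  ultimately show ?case
    using step.IH step.hyps(1) Henstock_Kurzweil_Integration.integral_combine[OF _ mono step.prems]
    by simp
qed simp

lemma jackson_d_nonneg: "0 \<le> jackson_d m j k"
  by (simp add: jackson_d_def)

lemma jackson_d_pos:
  assumes "1 \<le> j" "j \<le> k"
  shows "0 < jackson_d m j k"
proof -
  have u: "0 < real j * pi / real (k + 1)" "real j * pi / real (k + 1) < pi"
    using assms by (auto simp: divide_less_eq)
  then show ?thesis
    using assms sin_gt_zero[OF u] by (simp add: jackson_d_def)
qed

lemma jackson_d_1_le_1:
  assumes "0 \<le> m"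
  shows "jackson_d m 1 k \<le> 1"
proof -
  have h: "0 < pi / real (k + 1)" "pi / real (k + 1) \<le> pi"
    by (auto simp: field_simps)
  have "sin (pi / real (k + 1)) / (pi / real (k + 1)) \<le> 1"
    using sin_x_le_x[of "pi / real (k + 1)"] h by (subst divide_le_eq_1_pos) auto
  moreover have "0 \<le> sin (pi / real (k + 1))"
    using h by (intro sin_ge_zero) auto
  ultimately have "(sin (pi / real (k + 1)) / (pi / real (k + 1))) powr m \<le> 1 powr m"
    using assms h by (intro powr_mono2) auto
  then show ?thesis
    by (simp add: jackson_d_def)
qed

lemma one_minus_jackson_d_1_le:
  assumes m: "0 \<le> m" and k: "1 \<le> k"
  shows "1 - jackson_d m 1 k \<le> m * pi\<^sup>2 / (3 * real (k + 1)^2)"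
proof -
  define h where "h = pi / real (k + 1)"
  define x where "x = sin h / h"
  have h: "0 < h" "h \<le> pi / 2"
    using k by (auto simp: h_def field_simps)
  have x: "1/2 \<le> x" "x \<le> 1" "1 - h\<^sup>2 / 6 \<le> x"
    using sinc_ge_half[OF h] sin_x_le_x[of h] sin_ge_cubic[of h] h
    by (auto simp: x_def field_simps power2_eq_square power3_eq_cube)
  have "x powr m = exp (m * ln x)"
    using x by (simp add: powr_def)
  then have "1 - x powr m \<le> m * (- ln x)"
    using exp_ge_add_one_self[of "m * ln x"] by linarith
  also have "\<dots> \<le> m * (h\<^sup>2 / 3)"
  proof (rule mult_left_mono[OF _ m])
    have "- ln x \<le> 1 / x - 1"
      using ln_le_minus_one[of "1 / x"] x by (simp add: ln_div)
    also have "\<dots> = (1 - x) / x"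
      using x by (simp add: field_simps)
    also have "\<dots> \<le> (1 - x) / (1/2)"
      using x by (intro divide_left_mono) auto
    also have "\<dots> \<le> h\<^sup>2 / 3"
      using x by simp
    finally show "- ln x \<le> h\<^sup>2 / 3" .
  qed
  also have "\<dots> = m * pi\<^sup>2 / (3 * real (k + 1)^2)"
    by (simp add: h_def power_divide)
  finally show ?thesis
    by (simp add: jackson_d_def x_def h_def)
qed

lemma jackson_d_decrease_bound:
  assumes m: "m > 0" and j: "1 \<le> j" "Suc j \<le> k"
  defines "u \<equiv> \<lambda>j. real j * pi / real (k + 1)"
  shows "0 \<le> jackson_d m j k - jackson_d m (Suc j) k"
    and "jackson_d m j k - jackson_d m (Suc j) k \<le> u (Suc j) * m * integral {u j..u (Suc j)} (C_integrand m)"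
proof -
  have "0 < u j" "u j \<le> u (Suc j)" "u (Suc j) < pi"
    using j by (auto simp: u_def field_simps)
  note bounds = sinc_pow_decrease_bound[OF this m]
  show "0 \<le> jackson_d m j k - jackson_d m (Suc j) k"
    using bounds(1) j by (simp add: jackson_d_eq_sinc_pow u_def)
  show "jackson_d m j k - jackson_d m (Suc j) k \<le> u (Suc j) * m * integral {u j..u (Suc j)} (C_integrand m)"
    using bounds(2) j by (simp add: jackson_d_eq_sinc_pow u_def del: of_nat_Suc)
qed

lemma sum_jackson_d_decrements_le:
  assumes m: "m > 0" and k: "1 \<le> k'" "k' \<le> k"
  shows "(\<Sum>j=1..<k'. (jackson_d m j k - jackson_d m (Suc j) k) / real (Suc j)) \<le> pi * m * C_const m / real (k + 1)"
proof -
  define u where "u j = real j * pi / real (k + 1)" for j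
  have mono: "u j \<le> u (Suc j)" for j
    by (simp add: u_def divide_right_mono)
  have "real k' * pi \<le> real (k + 1) * pi"
    using k by (intro mult_right_mono) auto
  then have range: "0 \<le> u 1" "u 1 \<le> u k'" "u k' \<le> pi"
    using k by (auto simp: u_def divide_right_mono divide_le_eq simp del: of_nat_Suc)
  have int: "C_integrand m integrable_on {u 1..u k'}"
    by (rule integrable_subinterval_real[OF C_integrand_integrable[OF m]]) (use range in auto)
  have "(\<Sum>j=1..<k'. (jackson_d m j k - jackson_d m (Suc j) k) / real (Suc j))
      \<le> (\<Sum>j=1..<k'. pi / real (k + 1) * m * integral {u j..u (Suc j)} (C_integrand m))"
  proof (rule sum_mono)
    fix j assume "j \<in> {1..<k'}"
    then have "1 \<le> j" "Suc j \<le> k"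
      using k by auto
    from jackson_d_decrease_bound(2)[OF m this]
    show "(jackson_d m j k - jackson_d m (Suc j) k) / real (Suc j)
        \<le> pi / real (k + 1) * m * integral {u j..u (Suc j)} (C_integrand m)"
      by (simp add: u_def field_simps del: of_nat_Suc)
  qed
  also have "\<dots> = pi / real (k + 1) * m * integral {u 1..u k'} (C_integrand m)"
    unfolding sum_distrib_left[symmetric] sum_integral_consecutive[OF mono k(1) int] ..
  also have "\<dots> \<le> pi / real (k + 1) * m * integral {0..pi} (C_integrand m)"
    using range m
    by (intro mult_left_mono integral_subset_le int C_integrand_integrable) (auto intro: C_integrand_nonneg)
  finally show ?thesis
    by (simp add: C_const_eq_integral)
qed

section \<open>Damped partial sums\<close>

lemma weighted_sum_by_parts:
  fixes a d :: "nat \<Rightarrow> 'a::comm_ring_1"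
  assumes "d 0 = 1"
  shows "s - (\<Sum>j=0..n. d j * a j)
    = (\<Sum>j<n. (d j - d (Suc j)) * (s - (\<Sum>i=0..j. a i))) + d n * (s - (\<Sum>i=0..n. a i))"
  by (induction n) (simp_all add: assms algebra_simps)

lemma abs_sum_jackson_d_decrements_le:
  assumes m: "m > 0" and k: "1 \<le> k'" "k' \<le> k"
    and R: "\<And>j. \<bar>R j\<bar> \<le> K / (pi * real (j + 1))"
  shows "\<bar>\<Sum>j=1..<k'. (jackson_d m j k - jackson_d m (Suc j) k) * R j\<bar> \<le> m * C_const m * K / real (k + 1)"
proof -
  have "0 \<le> K"
    using order_trans[OF abs_ge_zero R[of 0]] pi_gt_zero by (simp add: zero_le_divide_iff)
  have "\<bar>\<Sum>j=1..<k'. (jackson_d m j k - jackson_d m (Suc j) k) * R j\<bar>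
      \<le> (\<Sum>j=1..<k'. K / pi * ((jackson_d m j k - jackson_d m (Suc j) k) / real (Suc j)))"
  proof (rule order_trans[OF sum_abs sum_mono])
    fix j assume "j \<in> {1..<k'}"
    then have "0 \<le> jackson_d m j k - jackson_d m (Suc j) k"
      using jackson_d_decrease_bound(1)[OF m] k by simp
    then have "\<bar>(jackson_d m j k - jackson_d m (Suc j) k) * R j\<bar>
        \<le> (jackson_d m j k - jackson_d m (Suc j) k) * (K / (pi * real (j + 1)))"
      using mult_left_mono[OF R[of j]] by (simp add: abs_mult)
    also have "\<dots> = K / pi * ((jackson_d m j k - jackson_d m (Suc j) k) / real (Suc j))"
      by simp
    finally show "\<bar>(jackson_d m j k - jackson_d m (Suc j) k) * R j\<bar>
        \<le> K / pi * ((jackson_d m j k - jackson_d m (Suc j) k) / real (Suc j))" .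
  qed
  also have "\<dots> = K / pi * (\<Sum>j=1..<k'. (jackson_d m j k - jackson_d m (Suc j) k) / real (Suc j))"
    by (simp add: sum_distrib_left)
  also have "\<dots> \<le> K / pi * (pi * m * C_const m / real (k + 1))"
    using sum_jackson_d_decrements_le[OF m k] \<open>0 \<le> K\<close> by (intro mult_left_mono) auto
  finally show ?thesis
    by (simp add: mult_ac)
qed

text \<open>The first decrement \<open>1 - jackson_d m 1 k\<close> is treated separately: the zeroth partial-sum
  error is only bounded by \<open>1\<close>.\<close>
lemma damped_angle_step_error:
  assumes m: "m > 0" and k: "1 \<le> k'" "k' \<le> k"
    and angles: "0 \<le> be" "be < al" "al \<le> pi" "0 \<le> t" "t \<le> pi"
    and not_endpoint: "\<not> (t = al \<and> al = pi)" "\<not> (t = be \<and> be = 0)"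
  shows "\<bar>angle_step al be t - (\<Sum>j=0..k'. cheb_c al be j * jackson_d m j k * cos (real j * t))\<bar>
    \<le> jackson_d m k' k * csc_sum al be t / (pi * real (k' + 1))
       + m * C_const m * csc_sum al be t / real (k + 1) + m * pi\<^sup>2 / (3 * real (k + 1)^2)"
proof -
  define d where "d j = jackson_d m j k" for j
  define R where "R j = angle_step al be t - (\<Sum>i=0..j. cheb_c al be i * cos (real i * t))" for j
  define K where "K = csc_sum al be t"
  have d0: "d 0 = 1"
    by (simp add: d_def jackson_d_def)
  have R: "\<bar>R j\<bar> \<le> K / (pi * real (j + 1))" for j
    unfolding R_def K_def by (rule angle_step_cos_partial_sum_error[OF angles not_endpoint])
  have "angle_step al be t - (\<Sum>j=0..k'. cheb_c al be j * jackson_d m j k * cos (real j * t))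
      = (\<Sum>j<k'. (d j - d (Suc j)) * R j) + d k' * R k'"
    using weighted_sum_by_parts[of d "angle_step al be t" "\<lambda>j. cheb_c al be j * cos (real j * t)" k', OF d0]
    by (simp add: R_def d_def mult_ac)
  also have "\<dots> = (d 0 - d 1) * R 0 + (\<Sum>j=1..<k'. (d j - d (Suc j)) * R j) + d k' * R k'"
  proof -
    have "{..<k'} = insert 0 {1..<k'}"
      using k by auto
    then show ?thesis by simp
  qed
  finally have split: "angle_step al be t - (\<Sum>j=0..k'. cheb_c al be j * jackson_d m j k * cos (real j * t))
      = (d 0 - d 1) * R 0 + (\<Sum>j=1..<k'. (d j - d (Suc j)) * R j) + d k' * R k'" .
  have "\<bar>R 0\<bar> \<le> 1"
  proof -
    have "R 0 = angle_step al be t - (al - be) / pi"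
      by (simp add: R_def cheb_c_def)
    moreover have "0 \<le> angle_step al be t" "angle_step al be t \<le> 1"
      by (simp_all add: angle_step_def)
    moreover have "0 \<le> (al - be) / pi" "(al - be) / pi \<le> 1"
      using angles by simp_all
    ultimately show ?thesis
      by linarith
  qed
  moreover have "0 \<le> d 0 - d 1" "d 0 - d 1 \<le> m * pi\<^sup>2 / (3 * real (k + 1)^2)"
    using jackson_d_1_le_1[of m k] one_minus_jackson_d_1_le[of m k] m k d0 by (simp_all add: d_def)
  ultimately have first: "\<bar>(d 0 - d 1) * R 0\<bar> \<le> m * pi\<^sup>2 / (3 * real (k + 1)^2)"
    using mult_left_le[of "\<bar>R 0\<bar>" "d 0 - d 1"] by (simp add: abs_mult)
  have last: "\<bar>d k' * R k'\<bar> \<le> jackson_d m k' k * K / (pi * real (k' + 1))"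
    using mult_left_mono[OF R[of k'] jackson_d_nonneg[of m k' k]] jackson_d_nonneg[of m k' k]
    by (simp add: d_def abs_mult)
  show ?thesis
    unfolding split K_def[symmetric]
    using first last abs_sum_jackson_d_decrements_le[OF m k R, unfolded d_def[symmetric]]
    by (smt (verit) abs_triangle_ineq)
qed

lemma one_divide_ereal: "1 / ereal c = (if c = 0 then \<infinity> else ereal (1 / c))"
  using ereal_divide[of 1 c] by (simp add: one_ereal_def)

lemma abs_csc_half_le_ereal: "\<bar>sin (x/2)\<bar> = c \<Longrightarrow> ereal (abs_csc_half x) \<le> 1 / ereal c"
  by (auto simp: one_divide_ereal abs_csc_half_def)

lemma csc_sum_le_Jfun: "ereal (csc_sum al be t) \<le> Jfun al be t"
proof -
  have abs_sin_half_swap: "\<bar>sin ((x - y) / 2)\<bar> = \<bar>sin ((y - x) / 2)\<bar>" for x y :: real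
    using sin_minus[of "(x - y) / 2"] by (simp add: minus_divide_left)
  have zero: "abs_csc_half 0 = 0"
    by (simp add: abs_csc_half_def)
  consider "t = al" | "t \<noteq> al" "t = be" | "t \<noteq> al" "t \<noteq> be"
    by blast
  then show ?thesis
  proof cases
    case 1
    have "ereal (csc_sum al be t)
        = ereal (abs_csc_half (al + al)) + ereal (abs_csc_half (al + be)) + ereal (abs_csc_half (be - al))"
      by (simp add: csc_sum_def 1 zero add.commute)
    also have "\<dots> \<le> 1 / ereal \<bar>sin al\<bar> + 1 / ereal \<bar>sin ((al + be) / 2)\<bar> + 1 / ereal \<bar>sin ((al - be) / 2)\<bar>"
      by (intro add_mono abs_csc_half_le_ereal) (simp_all add: abs_sin_half_swap)
    finally show ?thesis
      by (simp add: Jfun_def 1)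
  next
    case 2
    have "ereal (csc_sum al be t)
        = ereal (abs_csc_half (be + be)) + ereal (abs_csc_half (al + be)) + ereal (abs_csc_half (al - be))"
      by (simp add: csc_sum_def 2 zero ac_simps)
    also have "\<dots> \<le> 1 / ereal \<bar>sin be\<bar> + 1 / ereal \<bar>sin ((al + be) / 2)\<bar> + 1 / ereal \<bar>sin ((al - be) / 2)\<bar>"
      by (intro add_mono abs_csc_half_le_ereal) simp_all
    finally show ?thesis
      using 2 by (auto simp: Jfun_def)
  next
    case 3
    have "ereal (csc_sum al be t) = ereal (abs_csc_half (al + t)) + ereal (abs_csc_half (al - t))
        + ereal (abs_csc_half (be + t)) + ereal (abs_csc_half (be - t))"
      by (simp add: csc_sum_def)
    also have "\<dots> \<le> 1 / ereal \<bar>sin ((t + al) / 2)\<bar> + 1 / ereal \<bar>sin ((t - al) / 2)\<bar>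
        + 1 / ereal \<bar>sin ((t + be) / 2)\<bar> + 1 / ereal \<bar>sin ((t - be) / 2)\<bar>"
      by (intro add_mono abs_csc_half_le_ereal) (simp_all add: abs_sin_half_swap add.commute)
    finally show ?thesis
      by (simp add: Jfun_def 3)
  qed
qed

lemma Jfun_eq_infinity:
  assumes "be < al" and "(t = al \<and> al = pi) \<or> (t = be \<and> be = 0)"
  shows "Jfun al be t = \<infinity>"
proof -
  have "0 \<le> 1 / ereal \<bar>x\<bar>" for x
    by (simp add: one_divide_ereal)
  with assms show ?thesis
    by (auto simp: Jfun_def one_divide_ereal)
qed

lemma damped_angle_step_error_Jfun:
  assumes m: "m > 0" and k: "1 \<le> k'" "k' \<le> k"
    and angles: "0 \<le> be" "be < al" "al \<le> pi" "0 \<le> t" "t \<le> pi"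
  shows "ereal \<bar>angle_step al be t - (\<Sum>j=0..k'. cheb_c al be j * jackson_d m j k * cos (real j * t))\<bar>
    \<le> ereal (jackson_d m k' k / (pi * real (k' + 1))) * Jfun al be t
       + ereal (m * C_const m / real (k + 1)) * Jfun al be t + ereal (m * pi\<^sup>2 / (3 * real (k + 1)^2))"
proof (cases "Jfun al be t = \<infinity>")
  case True
  have "ereal (jackson_d m k' k / (pi * real (k' + 1))) * \<infinity> = \<infinity>"
    using jackson_d_pos[OF k, of m] by simp
  moreover have "0 \<le> ereal (m * C_const m / real (k + 1)) * \<infinity>"
    using m C_const_nonneg[OF m] by simp
  ultimately show ?thesis
    using True by simp
next
  case False
  then have "\<not> (t = al \<and> al = pi)" "\<not> (t = be \<and> be = 0)"
    using Jfun_eq_infinity[OF angles(2), of t] by auto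
  from damped_angle_step_error[OF m k angles this]
  have "ereal \<bar>angle_step al be t - (\<Sum>j=0..k'. cheb_c al be j * jackson_d m j k * cos (real j * t))\<bar>
      \<le> ereal (jackson_d m k' k / (pi * real (k' + 1))) * ereal (csc_sum al be t)
         + ereal (m * C_const m / real (k + 1)) * ereal (csc_sum al be t) + ereal (m * pi\<^sup>2 / (3 * real (k + 1)^2))"
    by simp
  also have "\<dots> \<le> ereal (jackson_d m k' k / (pi * real (k' + 1))) * Jfun al be t
       + ereal (m * C_const m / real (k + 1)) * Jfun al be t + ereal (m * pi\<^sup>2 / (3 * real (k + 1)^2))"
    using csc_sum_le_Jfun jackson_d_nonneg C_const_nonneg[OF m] m
    by (intro add_mono ereal_mult_left_mono order.refl) auto
  finally show ?thesis .
qed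

section \<open>Spectral norm of a difference of matrix functions\<close>

lemma cadj_cadj [simp]: "cadj (cadj A) = A"
  by (simp add: cadj_def vec_eq_iff)

lemma norm_vec_power2: "(norm (z :: complex ^'n))\<^sup>2 = (\<Sum>i\<in>UNIV. (cmod (z $ i))\<^sup>2)"
  by (simp add: norm_vec_def L2_set_def sum_nonneg)

lemma norm_isometry_mult:
  fixes V :: "complex ^'n ^'n"
  assumes U: "cadj V ** V = mat 1"
  shows "norm (V *v z) = norm z"
proof -
  have orth: "(\<Sum>i\<in>UNIV. cnj (V $ i $ l) * V $ i $ j) = (if l = j then 1 else 0)" for l j
    using arg_cong[OF U, of "\<lambda>M. M $ l $ j"] by (simp add: matrix_matrix_mult_def cadj_def mat_def)
  have "complex_of_real (\<Sum>i\<in>UNIV. (cmod ((V *v z) $ i))\<^sup>2) = (\<Sum>i\<in>UNIV. (V *v z) $ i * cnj ((V *v z) $ i))"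
    by (simp only: of_real_sum complex_norm_square)
  also have "\<dots> = (\<Sum>i\<in>UNIV. \<Sum>j\<in>UNIV. \<Sum>l\<in>UNIV. (z $ j * cnj (z $ l)) * (cnj (V $ i $ l) * V $ i $ j))"
    by (simp add: matrix_vector_mult_def cnj_sum sum_product mult_ac)
  also have "\<dots> = (\<Sum>j\<in>UNIV. \<Sum>l\<in>UNIV. \<Sum>i\<in>UNIV. (z $ j * cnj (z $ l)) * (cnj (V $ i $ l) * V $ i $ j))"
    by (subst sum.swap) (rule sum.cong[OF refl], rule sum.swap)
  also have "\<dots> = (\<Sum>j\<in>UNIV. \<Sum>l\<in>UNIV. (z $ j * cnj (z $ l)) * (if l = j then 1 else 0))"
    by (simp add: sum_distrib_left[symmetric] orth)
  also have "\<dots> = (\<Sum>j\<in>UNIV. z $ j * cnj (z $ j))"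
    by (simp add: if_distrib cong: if_cong)
  also have "\<dots> = complex_of_real (\<Sum>j\<in>UNIV. (cmod (z $ j))\<^sup>2)"
    by (simp only: of_real_sum complex_norm_square)
  finally have "(norm (V *v z))\<^sup>2 = (norm z)\<^sup>2"
    unfolding norm_vec_power2 of_real_eq_iff .
  then show ?thesis
    by (simp add: power2_eq_iff_nonneg)
qed

lemma diag_mat_mult_vec: "diag_mat d *v y = (\<chi> i. d i * y $ i)"
proof -
  have "(\<Sum>j\<in>UNIV. (if i = j then d i else 0) * y $ j) = (\<Sum>j\<in>UNIV. if i = j then d i * y $ j else 0)" for i
    by (rule sum.cong) auto
  then show ?thesis
    by (simp add: diag_mat_def matrix_vector_mult_def vec_eq_iff)
qed

lemma norm_diag_mat_mult_le:
  assumes "\<And>i. cmod (d i) \<le> B"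
  shows "norm (diag_mat d *v y) \<le> B * norm y"
proof -
  have "0 \<le> B"
    using assms[of undefined] norm_ge_zero order_trans by blast
  have "(norm (diag_mat d *v y))\<^sup>2 = (\<Sum>i\<in>UNIV. (cmod (d i * y $ i))\<^sup>2)"
    by (simp add: norm_vec_power2 diag_mat_mult_vec)
  also have "\<dots> \<le> (\<Sum>i\<in>UNIV. B\<^sup>2 * (cmod (y $ i))\<^sup>2)"
    using assms by (intro sum_mono) (auto simp: norm_mult power_mult_distrib intro!: mult_right_mono power_mono)
  also have "\<dots> = (B * norm y)\<^sup>2"
    by (simp add: power_mult_distrib norm_vec_power2 sum_distrib_left)
  finally show ?thesis
    using \<open>0 \<le> B\<close> by (simp add: power2_le_iff_abs_le)
qed

lemma mat_fun_diff_mult_vec: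
  "(mat_fun V lam f - mat_fun V lam g) *v x
    = V *v (diag_mat (\<lambda>i. complex_of_real (f (lam i) - g (lam i))) *v (cadj V *v x))"
proof -
  have "mat_fun V lam h *v x = V *v (diag_mat (\<lambda>i. complex_of_real (h (lam i))) *v (cadj V *v x))" for h
    by (simp add: mat_fun_def matrix_vector_mul_assoc matrix_mul_assoc)
  moreover have "diag_mat (\<lambda>i. complex_of_real (f (lam i))) *v y - diag_mat (\<lambda>i. complex_of_real (g (lam i))) *v y
      = diag_mat (\<lambda>i. complex_of_real (f (lam i) - g (lam i))) *v y" for y
    by (simp add: diag_mat_mult_vec vec_eq_iff left_diff_distrib)
  ultimately show ?thesis
    by (simp add: matrix_vector_mult_diff_rdistrib flip: matrix_vector_mult_diff_distrib)
qed

lemma spec_norm_mat_fun_diff_le: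
  assumes "unitary_mat V" and "\<And>i. \<bar>f (lam i) - g (lam i)\<bar> \<le> B"
  shows "spec_norm (mat_fun V lam f - mat_fun V lam g) \<le> B"
  unfolding spec_norm_def
proof (rule onorm_le)
  fix x
  have "cadj V ** V = mat 1" "cadj (cadj V) ** cadj V = mat 1"
    using assms(1) by (simp_all add: unitary_mat_def)
  then have "norm ((mat_fun V lam f - mat_fun V lam g) *v x)
      = norm (diag_mat (\<lambda>i. complex_of_real (f (lam i) - g (lam i))) *v (cadj V *v x))"
    by (simp add: mat_fun_diff_mult_vec norm_isometry_mult)
  also have "\<dots> \<le> B * norm (cadj V *v x)"
    using assms(2) by (intro norm_diag_mat_mult_le) (simp flip: of_real_diff)
  also have "norm (cadj V *v x) = norm x"
    using norm_isometry_mult[OF \<open>cadj (cadj V) ** cadj V = mat 1\<close>] .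
  finally show "norm ((mat_fun V lam f - mat_fun V lam g) *v x) \<le> B * norm x" .
qed

section \<open>From eigenvalues to angles\<close>

lemma cheb_T_cos: "cheb_T n (cos t) = cos (real n * t)"
proof (induction n t rule: cheb_T.induct)
  case (3 n t)
  have "cos (real (Suc (Suc n)) * t) = 2 * cos t * cos (real (Suc n) * t) - cos (real n * t)"
    using cos_add[of "real (Suc n) * t" t] cos_diff[of "real (Suc n) * t" t]
    by (simp add: distrib_right algebra_simps)
  with 3 show ?case by simp
qed simp_all

lemma abs_lmap_le_1:
  assumes "lmin < lmax" "lmin \<le> x" "x \<le> lmax"
  shows "\<bar>lmap lmin lmax x\<bar> \<le> 1"
  using assms by (auto simp: lmap_def field_simps)

lemma lmap_less_iff: "lmin < lmax \<Longrightarrow> lmap lmin lmax x < lmap lmin lmax y \<longleftrightarrow> x < y"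
  by (auto simp: lmap_def divide_less_cancel)

lemma lmap_eq_iff: "lmin < lmax \<Longrightarrow> lmap lmin lmax x = lmap lmin lmax y \<longleftrightarrow> x = y"
  by (auto simp: lmap_def)

lemma arccos_lmap_bounds:
  assumes "lmin < lmax" "lmin \<le> x" "x \<le> lmax"
  shows "0 \<le> arccos (lmap lmin lmax x)" "arccos (lmap lmin lmax x) \<le> pi"
  using abs_lmap_le_1[OF assms] by (auto intro: arccos_lbound arccos_ubound)

lemma arccos_lmap_less_iff:
  assumes "lmin < lmax" "lmin \<le> x" "x \<le> lmax" "lmin \<le> y" "y \<le> lmax"
  shows "arccos (lmap lmin lmax x) < arccos (lmap lmin lmax y) \<longleftrightarrow> y < x"
  using assms by (simp add: arccos_less_mono abs_lmap_le_1 lmap_less_iff)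

lemma arccos_lmap_eq_iff:
  assumes "lmin < lmax" "lmin \<le> x" "x \<le> lmax" "lmin \<le> y" "y \<le> lmax"
  shows "arccos (lmap lmin lmax x) = arccos (lmap lmin lmax y) \<longleftrightarrow> x = y"
  using assms by (simp add: arccos_eq_iff abs_lmap_le_1 lmap_eq_iff)

lemma step_s_eq_angle_step:
  assumes l: "lmin < lmax" and range: "lmin \<le> a" "a \<le> lmax" "lmin \<le> b" "b \<le> lmax" "lmin \<le> x" "x \<le> lmax"
  shows "step_s a b x
    = angle_step (arccos (lmap lmin lmax a)) (arccos (lmap lmin lmax b)) (arccos (lmap lmin lmax x))"
  using arccos_lmap_less_iff[OF l] arccos_lmap_eq_iff[OF l] range
  by (simp add: step_s_def angle_step_def)

lemma rho_eq_cos_sum: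
  assumes "lmin < lmax" "lmin \<le> x" "x \<le> lmax"
  shows "rho lmin lmax a b m k' k x
    = (\<Sum>j=0..k'. cheb_c (arccos (lmap lmin lmax a)) (arccos (lmap lmin lmax b)) j * jackson_d m j k
                  * cos (real j * arccos (lmap lmin lmax x)))"
proof -
  have "lmap lmin lmax x = cos (arccos (lmap lmin lmax x))"
    using abs_lmap_le_1[OF assms] by (simp add: cos_arccos_abs)
  then show ?thesis
    unfolding rho_def by (metis cheb_T_cos)
qed

lemma step_s_rho_error:
  assumes l: "lmin < lmax" and ab: "lmin \<le> a" "a < b" "b \<le> lmax" and x: "lmin \<le> x" "x \<le> lmax"
    and m: "m > 0" and k: "1 \<le> k'" "k' \<le> k"
  shows "ereal \<bar>step_s a b x - rho lmin lmax a b m k' k x\<bar>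
    \<le> ereal (jackson_d m k' k / (pi * real (k' + 1)))
        * Jfun (arccos (lmap lmin lmax a)) (arccos (lmap lmin lmax b)) (arccos (lmap lmin lmax x))
      + ereal (m * C_const m / real (k + 1))
        * Jfun (arccos (lmap lmin lmax a)) (arccos (lmap lmin lmax b)) (arccos (lmap lmin lmax x))
      + ereal (m * pi\<^sup>2 / (3 * real (k + 1)^2))"
proof -
  have a: "lmin \<le> a" "a \<le> lmax" and b: "lmin \<le> b" "b \<le> lmax"
    using ab by auto
  have "0 \<le> arccos (lmap lmin lmax b)" "arccos (lmap lmin lmax b) < arccos (lmap lmin lmax a)"
    "arccos (lmap lmin lmax a) \<le> pi" "0 \<le> arccos (lmap lmin lmax x)" "arccos (lmap lmin lmax x) \<le> pi"
    using arccos_lmap_bounds[OF l b] arccos_lmap_less_iff[OF l b a] arccos_lmap_bounds[OF l a]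
      arccos_lmap_bounds[OF l x] ab
    by simp_all
  from damped_angle_step_error_Jfun[OF m k this]
  show ?thesis
    by (simp add: step_s_eq_angle_step[OF l a b x] rho_eq_cos_sum[OF l x])
qed

theorem theorem3p4:
  fixes A V :: "complex ^'n ^'n"
    and lam :: "'n \<Rightarrow> real"
    and lmin lmax a b m :: real
    and k k' :: nat
  assumes herm: "hermitian_mat A"
    and unit: "unitary_mat V"
    and decomp: "A = V ** diag_mat (\<lambda>i. complex_of_real (lam i)) ** cadj V"
    and eig_range: "\<forall>i. lmin \<le> lam i \<and> lam i \<le> lmax"
    and lminmax: "lmin < lmax"
    and ab: "lmin \<le> a" "a < b" "b \<le> lmax"
    and m_pos: "0 < m"
    and k_pos: "1 \<le> k"
    and k'_range: "1 \<le> k'" "k' \<le> k"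
  shows "ereal (spec_norm (mat_fun V lam (step_s a b) - mat_fun V lam (rho lmin lmax a b m k' k)))
    \<le> ereal (jackson_d m k' k / (pi * real (k' + 1)))
          * Max (range (\<lambda>i. Jfun (arccos (lmap lmin lmax a)) (arccos (lmap lmin lmax b))
                                  (arccos (lmap lmin lmax (lam i)))))
      + ereal (m * C_const m / real (k + 1))
          * Max (range (\<lambda>i. Jfun (arccos (lmap lmin lmax a)) (arccos (lmap lmin lmax b))
                                  (arccos (lmap lmin lmax (lam i)))))
      + ereal (m * pi\<^sup>2 / (3 * real (k + 1)^2))"
proof -
  let ?J = "\<lambda>i. Jfun (arccos (lmap lmin lmax a)) (arccos (lmap lmin lmax b)) (arccos (lmap lmin lmax (lam i)))"
  let ?err = "\<lambda>i. \<bar>step_s a b (lam i) - rho lmin lmax a b m k' k (lam i)\<bar>"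
  have "Max (range ?err) \<in> range ?err"
    by (intro Max_in) auto
  then obtain i where i: "Max (range ?err) = ?err i"
    by blast
  have "spec_norm (mat_fun V lam (step_s a b) - mat_fun V lam (rho lmin lmax a b m k' k)) \<le> ?err i"
    unfolding i[symmetric] by (intro spec_norm_mat_fun_diff_le[OF unit] Max_ge) auto
  then have "ereal (spec_norm (mat_fun V lam (step_s a b) - mat_fun V lam (rho lmin lmax a b m k' k)))
      \<le> ereal (?err i)"
    by simp
  also have "\<dots> \<le> ereal (jackson_d m k' k / (pi * real (k' + 1))) * ?J i
      + ereal (m * C_const m / real (k + 1)) * ?J i + ereal (m * pi\<^sup>2 / (3 * real (k + 1)^2))"
    using eig_range by (intro step_s_rho_error[OF lminmax ab _ _ m_pos k'_range]) auto
  also have "\<dots> \<le> ereal (jackson_d m k' k / (pi * real (k' + 1))) * Max (range ?J)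
      + ereal (m * C_const m / real (k + 1)) * Max (range ?J) + ereal (m * pi\<^sup>2 / (3 * real (k + 1)^2))"
    using jackson_d_nonneg C_const_nonneg[OF m_pos] m_pos
    by (intro add_mono ereal_mult_left_mono Max_ge order.refl) auto
  finally show ?thesis .
qed

end
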